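(* Let $B$ be a singleton board with $n$ columns, padded with columns of height zero on the left so that $\xi_m(B)=\langle z_1,\ldots,z_n\rangle$ has only non-negative entries. For each integer $k$ let $v_k$ be the number of entries of $\xi_m(B)$ equal to $k$, and let $M$ be the greatest integer with $v_M\ne0$. Let $S$ be the set of non-negative multiples of $m$ strictly less than $M$. Let $i$ be the least non-negative integer such that either $v_i>1$, or $v_i=1$ and $i$ is not a multiple of $m$. If $v_s\ge2$ for all $s\in S$ with $s>i$, then $B$ is connected by a sequence of edges in $G_m(B)$ to a board $B'$ with $m$-level root vector $\xi_m(B')=\langle 0,m,2m,\ldots,\lfloor M-1\rfloor_m,M,\ldots,z_n\rangle$; that is, the first $\frac{\lfloor M-1\rfloor_m}{m}+1$ entries of $\xi_m(B')$ are the non-negative multiples of $m$ from $0$ to $\lfloor M-1\rfloor_m$ in increasing order, and the next entry is the first occurrence of the value $M$.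
   Context: Fix an integer $m>0$. A Ferrers board is given by a weakly increasing sequence of non-negative integers $B=(b_1,\ldots,b_n)$ of column heights (cells in column $i$, rows $1,\ldots,b_i$, of the first quadrant); prepending height-$0$ columns on the left does not change the board, and boards are compared with the same number of columns by such padding. The rows are partitioned into levels: level $t$ consists of rows $(t-1)m+1,\ldots,tm$. An $m$-level rook placement of $k$ rooks is a set of $k$ cells of $B$, no two in the same level or the same column; $r_{k,m}(B)$ is their number, and two boards are $m$-level rook equivalent if they have equal $r_{k,m}$ for all $k\ge0$. For an integer $o$, $\lfloor o\rfloor_m$ is the largest multiple of $m$ that is $\le o$. $B$ is singleton if for each $i<n$, $b_i-\lfloor b_i\rfloor_m\ne0$ implies $\lfloor b_i\rfloor_m<\lfloor b_{i+1}\rfloor_m$. The $m$-level root vector of $B$ is $\xi_m(B)=\langle 0-b_1,m-b_2,\ldots,m(n-1)-b_n\rangle$. The $m$-level rook equivalence graph $G_m(B)$ of a singleton board $B$ has as vertices all singleton boards $m$-level rook equivalent to $B$, and $\{B_1,B_2\}$ is an edge iff, written with the same number of columns, $B_1$ and $B_2$ differ in exactly two columns $i,j$, where $B_1$ has $k$ more cells than $B_2$ in column $i$ and $k$ fewer in column $j$, for some $k>0$. *)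

theory Defs
  imports Main
begin

text \<open>A Ferrers board is a list of column heights (column 0 is the leftmost one),
  weakly increasing.  Cells are pairs (column, row), rows numbered from 1.\<close>

definition ferrers :: "nat list \<Rightarrow> bool" where
  "ferrers B \<longleftrightarrow> sorted B"

definition cells :: "nat list \<Rightarrow> (nat \<times> nat) set" where
  "cells B = {(c, r). c < length B \<and> 1 \<le> r \<and> r \<le> B ! c}"

text \<open>Level of row r (rows (t-1)m+1..tm form level t; here levels are 0-indexed).\<close>
definition level :: "nat \<Rightarrow> nat \<Rightarrow> nat" where
  "level m r = (r - 1) div m"

definition rook_placements :: "nat \<Rightarrow> nat list \<Rightarrow> nat \<Rightarrow> (nat \<times> nat) set set" where
  "rook_placements m B k =
     {P. P \<subseteq> cells B \<and> card P = k \<and> inj_on fst P \<and> inj_on (\<lambda>(c, r). level m r) P}"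

definition rook_number :: "nat \<Rightarrow> nat \<Rightarrow> nat list \<Rightarrow> nat" where
  "rook_number k m B = card (rook_placements m B k)"

definition rook_equiv :: "nat \<Rightarrow> nat list \<Rightarrow> nat list \<Rightarrow> bool" where
  "rook_equiv m B1 B2 \<longleftrightarrow> (\<forall>k. rook_number k m B1 = rook_number k m B2)"

definition floor_m :: "nat \<Rightarrow> int \<Rightarrow> int" where
  "floor_m m x = int m * (x div int m)"

definition singleton_board :: "nat \<Rightarrow> nat list \<Rightarrow> bool" where
  "singleton_board m B \<longleftrightarrow> ferrers B \<and>
     (\<forall>i. Suc i < length B \<longrightarrow>
        int (B ! i) - floor_m m (int (B ! i)) \<noteq> 0 \<longrightarrow>
        floor_m m (int (B ! i)) < floor_m m (int (B ! Suc i)))"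

definition root_vector :: "nat \<Rightarrow> nat list \<Rightarrow> int list" where
  "root_vector m B = map (\<lambda>j. int (m * j) - int (B ! j)) [0..<length B]"

definition pad :: "nat \<Rightarrow> nat list \<Rightarrow> nat list" where
  "pad L B = replicate (L - length B) 0 @ B"

definition board_edge :: "nat list \<Rightarrow> nat list \<Rightarrow> bool" where
  "board_edge B1 B2 \<longleftrightarrow>
     (let L = max (length B1) (length B2); C1 = pad L B1; C2 = pad L B2 in
      \<exists>i j k. i < L \<and> j < L \<and> i \<noteq> j \<and> k > 0 \<and>
        C1 ! i = C2 ! i + k \<and> C2 ! j = C1 ! j + k \<and>
        (\<forall>l < L. l \<noteq> i \<longrightarrow> l \<noteq> j \<longrightarrow> C1 ! l = C2 ! l))"

definition G_vertex :: "nat \<Rightarrow> nat list \<Rightarrow> nat list \<Rightarrow> bool" where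
  "G_vertex m B X \<longleftrightarrow> singleton_board m X \<and> rook_equiv m X B"

definition G_edge :: "nat \<Rightarrow> nat list \<Rightarrow> nat list \<Rightarrow> nat list \<Rightarrow> bool" where
  "G_edge m B X Y \<longleftrightarrow> G_vertex m B X \<and> G_vertex m B Y \<and> board_edge X Y"

definition vcount :: "int list \<Rightarrow> int \<Rightarrow> nat" where
  "vcount z k = card {j. j < length z \<and> z ! j = k}"

end

theory Submission
  imports Defs "HOL-Library.Multiset"
begin

(*
  By the m-level factorization theorem, the rook numbers of a singleton board depend only on the
  multiset of entries of its root vector z, and the singleton boards are exactly those whose root
  vector satisfies z_(j+1) <= floor_m z_j + m.  Swapping two distinct entries of z so that this
  condition survives is therefore an edge of G_m(B), and it suffices to reach the target root
  vector by such swaps.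

  Let i be the least irregular value.  While the last entry y exceeds i, it can be swapped with a
  smaller entry standing right after an entry whose next multiple of m is at least y: otherwise the
  entries would be split by a multiple of m below y occurring only once, which the hypothesis on
  the doubled multiples above i rules out.  Once i is last, either it is the unique maximum and the
  other entries are 0, m, 2m, ..., or the hypothesis passes to the vector without its last entry and
  induction on the length applies; since i is the least irregular value, appending i keeps every
  admissible rearrangement of the shorter vector admissible.
*)

section \<open>Rounding to multiples of \<open>m\<close>\<close>

lemma floor_m_of_nat: "floor_m m (int a) = int (m * (a div m))"
  unfolding floor_m_def by (simp add: zdiv_int)

lemma floor_m_eqI:
  assumes "m > 0" "t = int m * k" "t \<le> x" "x < t + int m"
  shows "floor_m m x = t"
proof -
  have "x div int m = k + (x - t) div int m"
    using assms div_mult_self2[of "int m" "x - t" k] by simp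
  also have "(x - t) div int m = 0"
    using assms by simp
  finally show ?thesis
    unfolding floor_m_def using assms by simp
qed

lemma floor_m_le: "m > 0 \<Longrightarrow> floor_m m x \<le> x"
  unfolding floor_m_def using minus_mod_eq_mult_div[of x "int m"] pos_mod_sign[of "int m" x]
  by linarith

lemma dvd_le_floor_m:
  assumes m: "m > 0" and "int m dvd t" "t \<le> x"
  shows "t \<le> floor_m m x"
proof -
  obtain k where t: "t = int m * k"
    using assms(2) by (auto elim: dvdE)
  then have "k \<le> x div int m"
    using m zdiv_mono1[OF \<open>t \<le> x\<close>, of "int m"] by simp
  then show ?thesis
    unfolding floor_m_def t using m by simp
qed

lemma dvd_floor_m: "int m dvd floor_m m x"
  unfolding floor_m_def by simp

definition next_mult :: "nat \<Rightarrow> int \<Rightarrow> int" where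
  "next_mult m x = floor_m m x + int m"

lemma less_next_mult: "m > 0 \<Longrightarrow> x < next_mult m x"
  unfolding next_mult_def floor_m_def using minus_mod_eq_mult_div[of x "int m"]
    pos_mod_bound[of "int m" x] by linarith

lemma next_mult_le: "m > 0 \<Longrightarrow> next_mult m x \<le> x + int m"
  unfolding next_mult_def using floor_m_le by simp

lemma next_mult_mono: "m > 0 \<Longrightarrow> x \<le> y \<Longrightarrow> next_mult m x \<le> next_mult m y"
  unfolding next_mult_def floor_m_def by (simp add: zdiv_mono1)

lemma dvd_next_mult: "int m dvd next_mult m x"
  unfolding next_mult_def floor_m_def by simp

lemma next_mult_le_dvd:
  assumes m: "m > 0" and "int m dvd t" "x < t"
  shows "next_mult m x \<le> t"
proof -
  obtain k where t: "t = int m * k"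
    using assms(2) by (auto elim: dvdE)
  have "int m * (x div int m) < int m * k"
    using floor_m_le[OF m, of x] \<open>x < t\<close> unfolding floor_m_def t by simp
  then have "x div int m + 1 \<le> k"
    using m by (simp add: mult_less_cancel_left)
  then show ?thesis
    unfolding next_mult_def floor_m_def t using m
    by (metis distrib_left mult.right_neutral mult_le_cancel_left_pos of_nat_0_less_iff)
qed

section \<open>Rook numbers and the factorization theorem\<close>

lemma finite_cells: "finite (cells B)"
proof -
  have "cells B \<subseteq> (SIGMA c:{..<length B}. {1..B ! c})"
    unfolding cells_def by auto
  then show ?thesis
    by (rule finite_subset) auto
qed

lemma finite_rook_placements: "finite (rook_placements m B k)"
  by (rule finite_subset[of _ "Pow (cells B)"]) (auto simp: rook_placements_def finite_cells)

lemma rook_number_0: "rook_number 0 m B = 1"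
proof -
  have "rook_placements m B 0 = {{}}"
    unfolding rook_placements_def using finite_cells
    by (auto intro: finite_subset simp: card_eq_0_iff)
  then show ?thesis
    unfolding rook_number_def by simp
qed

lemma rook_number_eq_0:
  assumes "length B < k"
  shows "rook_number k m B = 0"
proof -
  have "card P \<le> length B" if "P \<in> rook_placements m B k" for P
  proof -
    have "P \<subseteq> cells B" "inj_on fst P"
      using that unfolding rook_placements_def by auto
    moreover have "fst ` P \<subseteq> {..<length B}"
      using \<open>P \<subseteq> cells B\<close> unfolding cells_def by auto
    ultimately show ?thesis
      by (metis card_image card_lessThan card_mono finite_lessThan)
  qed
  then have "rook_placements m B k = {}"
    using assms unfolding rook_placements_def by fastforce
  then show ?thesis
    unfolding rook_number_def by simp
qed

lemma cells_append:
  "cells (B @ [b]) = cells B \<union> {(length B, r) | r. 1 \<le> r \<and> r \<le> b}"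
  unfolding cells_def by (auto simp: nth_append less_Suc_eq)

lemma level_eq_iff:
  assumes "m > 0" "1 \<le> r"
  shows "level m r = l \<longleftrightarrow> r \<in> {l * m + 1..l * m + m}"
proof -
  have "(r - 1) div m = l \<longleftrightarrow> l * m \<le> r - 1 \<and> r - 1 < l * m + m"
    using assms(1) by (metis add.commute div_nat_eqI dividend_less_div_times
        mult.commute mult_Suc_right times_div_less_eq_dividend)
  then show ?thesis
    unfolding level_def using assms(2) by (auto simp: le_diff_conv2)
qed

definition free_rows :: "nat \<Rightarrow> nat \<Rightarrow> (nat \<times> nat) set \<Rightarrow> nat set" where
  "free_rows m b P = {r. 1 \<le> r \<and> r \<le> b \<and> level m r \<notin> (\<lambda>(c, r). level m r) ` P}"

(* Each of the k levels used by P blocks m whole rows of the new column. *)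
lemma card_free_rows:
  assumes m: "m > 0" and P: "P \<in> rook_placements m B k"
    and fits: "\<forall>(c, r)\<in>cells B. m * Suc (level m r) \<le> b"
  shows "card (free_rows m b P) + m * k = b"
proof -
  define L where "L = (\<lambda>(c, r). level m r) ` P"
  define block where "block l = {l * m + 1..l * m + m}" for l
  have P_cells: "P \<subseteq> cells B"
    using P unfolding rook_placements_def by auto
  have "finite P"
    using P_cells finite_cells finite_subset by blast
  then have L: "finite L" "card L = k"
    using P unfolding L_def rook_placements_def by (auto simp: card_image)
  have in_block: "r \<in> block l \<longleftrightarrow> 1 \<le> r \<and> level m r = l" for r l
    using level_eq_iff[OF m] unfolding block_def by force
  have block_le: "block l \<subseteq> {1..b}" if "l \<in> L" for l
  proof -
    obtain c r where "(c, r) \<in> cells B" "l = level m r"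
      using \<open>l \<in> L\<close> P_cells unfolding L_def by auto
    then show ?thesis
      using fits unfolding block_def by (auto simp: algebra_simps)
  qed
  have used: "(\<Union>l\<in>L. block l) \<subseteq> {1..b}"
    using block_le by blast
  have "free_rows m b P = {1..b} - (\<Union>l\<in>L. block l)"
    unfolding free_rows_def L_def using in_block by auto
  moreover have "card (\<Union>l\<in>L. block l) = m * k"
  proof -
    have "block l \<inter> block l' = {}" if "l \<noteq> l'" for l l'
      using that by (auto simp only: in_block disjoint_iff)
    then show ?thesis
      using L by (subst card_UN_disjoint) (auto simp: block_def)
  qed
  ultimately show ?thesis
    using used card_mono[OF _ used] by (simp add: card_Diff_subset finite_subset[OF used])
qed

lemma rook_placement_column_less:
  "P \<in> rook_placements m B k \<Longrightarrow> x \<in> P \<Longrightarrow> fst x < length B"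
  unfolding rook_placements_def cells_def by auto

lemma rook_placement_insert:
  assumes P: "P \<in> rook_placements m B k" and r: "r \<in> free_rows m b P"
  shows "insert (length B, r) P \<in> rook_placements m (B @ [b]) (Suc k)"
proof -
  have "finite P"
    using finite_subset finite_cells P unfolding rook_placements_def by blast
  moreover have "(length B, r) \<notin> P" "length B \<notin> fst ` P"
    using rook_placement_column_less[OF P] by fastforce+
  ultimately show ?thesis
    using P r unfolding rook_placements_def free_rows_def cells_append by auto
qed

lemma rook_placement_remove:
  assumes P: "P \<in> rook_placements m (B @ [b]) (Suc k)" and x: "(length B, r) \<in> P"
  shows "P - {(length B, r)} \<in> rook_placements m B k"
    and "r \<in> free_rows m b (P - {(length B, r)})"
proof -
  have cells: "P \<subseteq> cells (B @ [b])" and card: "card P = Suc k"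
    and inj_col: "inj_on fst P" and inj_lev: "inj_on (\<lambda>(c, r). level m r) P"
    using P unfolding rook_placements_def by auto
  have "finite P"
    using cells finite_cells finite_subset by blast
  have "P - {(length B, r)} \<subseteq> cells B"
  proof
    fix y assume y: "y \<in> P - {(length B, r)}"
    then have "fst y \<noteq> length B"
      using inj_col x by (metis DiffD1 DiffD2 fst_conv inj_onD singletonI)
    then show "y \<in> cells B"
      using y cells unfolding cells_append by auto
  qed
  then show "P - {(length B, r)} \<in> rook_placements m B k"
    unfolding rook_placements_def using card \<open>finite P\<close> x
    by (auto intro: inj_on_subset[OF inj_col] inj_on_subset[OF inj_lev])
  have "1 \<le> r" "r \<le> b"
    using cells x unfolding cells_def by (auto simp: nth_append)
  moreover have "level m r \<notin> (\<lambda>(c, r). level m r) ` (P - {(length B, r)})"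
    using inj_lev x unfolding inj_on_def by fastforce
  ultimately show "r \<in> free_rows m b (P - {(length B, r)})"
    unfolding free_rows_def by simp
qed

lemma rook_placements_append:
  "rook_placements m (B @ [b]) (Suc k) = rook_placements m B (Suc k) \<union>
     (\<lambda>(P, r). insert (length B, r) P) ` (SIGMA P:rook_placements m B k. free_rows m b P)"
  (is "?L = ?R \<union> ?E")
proof (intro equalityI subsetI)
  fix P assume P: "P \<in> ?L"
  show "P \<in> ?R \<union> ?E"
  proof (cases "\<exists>r. (length B, r) \<in> P")
    case True
    then obtain r where x: "(length B, r) \<in> P" by blast
    then have "P = insert (length B, r) (P - {(length B, r)})" by blast
    then show ?thesis
      using rook_placement_remove[OF P x] by blast
  next
    case False
    then have "P \<subseteq> cells B"
      using P unfolding rook_placements_def cells_append by auto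
    then show ?thesis
      using P unfolding rook_placements_def by auto
  qed
next
  fix P assume "P \<in> ?R \<union> ?E"
  moreover have "?R \<subseteq> ?L"
    unfolding rook_placements_def cells_append by auto
  ultimately show "P \<in> ?L"
    using rook_placement_insert by auto
qed

lemma inj_on_insert_last_column:
  "inj_on (\<lambda>(P, r). insert (length B, r) P) (SIGMA P:rook_placements m B k. free_rows m b P)"
proof (rule inj_onI, clarify)
  fix P r P' r'
  assume "P \<in> rook_placements m B k" "P' \<in> rook_placements m B k"
    and eq: "insert (length B, r) P = insert (length B, r') P'"
  then have less: "\<forall>x\<in>P \<union> P'. fst x < length B"
    using rook_placement_column_less by blast
  then have "P = {x \<in> insert (length B, r) P. fst x \<noteq> length B}"
    and "P' = {x \<in> insert (length B, r') P'. fst x \<noteq> length B}"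
    by force+
  then have "P = P'"
    using eq by simp
  moreover have "r = r'"
    using eq less by (metis UnI2 fst_conv insertE insertI1 less_irrefl snd_conv)
  ultimately show "P = P' \<and> r = r'" ..
qed

lemma rook_number_append:
  assumes m: "m > 0" and fits: "\<forall>(c, r)\<in>cells B. m * Suc (level m r) \<le> b"
  shows "int (rook_number (Suc k) m (B @ [b])) =
    int (rook_number (Suc k) m B) + int (rook_number k m B) * (int b - int (m * k))"
proof -
  let ?ext = "\<lambda>(P, r). insert (length B, r) P"
  let ?S = "SIGMA P:rook_placements m B k. free_rows m b P"
  have "finite ?S"
    using finite_rook_placements by (rule finite_SigmaI) (simp add: free_rows_def)
  moreover have "inj_on ?ext ?S"
    by (rule inj_on_insert_last_column)
  moreover have "rook_placements m B (Suc k) \<inter> ?ext ` ?S = {}"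
    using rook_placement_column_less by fastforce
  ultimately have "rook_number (Suc k) m (B @ [b]) = rook_number (Suc k) m B + card ?S"
    unfolding rook_number_def rook_placements_append
    by (simp add: card_Un_disjoint finite_rook_placements card_image)
  moreover have "int (card ?S) = int (rook_number k m B) * (int b - int (m * k))"
  proof -
    have "int (card (free_rows m b P)) = int b - int (m * k)" if "P \<in> rook_placements m B k" for P
      using card_free_rows[OF m that fits] by linarith
    then show ?thesis
      using finite_rook_placements
      by (simp add: card_SigmaI free_rows_def rook_number_def)
  qed
  ultimately show ?thesis by simp
qed

definition falling_m :: "nat \<Rightarrow> nat \<Rightarrow> int \<Rightarrow> int" where
  "falling_m m j x = (\<Prod>s<j. x - int (m * s))"

definition rook_poly :: "nat \<Rightarrow> nat list \<Rightarrow> int \<Rightarrow> int" where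
  "rook_poly m B x = (\<Sum>k\<le>length B. int (rook_number k m B) * falling_m m (length B - k) x)"

lemma rook_poly_append:
  assumes m: "m > 0" and fits: "\<forall>(c, r)\<in>cells B. m * Suc (level m r) \<le> b"
  shows "rook_poly m (B @ [b]) x = rook_poly m B x * (x + int b - int (m * length B))"
proof -
  let ?n = "length B"
  let ?r = "\<lambda>k. int (rook_number k m B)"
  let ?f = "\<lambda>j. falling_m m j x"
  define in_last where "in_last k = (if k = 0 then 0 else ?r (k - 1) * (int b - int (m * (k - 1))))" for k
  have rec: "int (rook_number k m (B @ [b])) = ?r k + in_last k" for k
    using rook_number_append[OF m fits, of "k - 1"] unfolding in_last_def
    by (cases k) (auto simp: rook_number_0)
  have "rook_poly m (B @ [b]) x = (\<Sum>k\<le>Suc ?n. ?r k * ?f (Suc ?n - k)) +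
      (\<Sum>k\<le>Suc ?n. in_last k * ?f (Suc ?n - k))"
    unfolding rook_poly_def rec by (simp add: distrib_right sum.distrib)
  also have "(\<Sum>k\<le>Suc ?n. ?r k * ?f (Suc ?n - k)) =
      (\<Sum>k\<le>?n. ?r k * ?f (?n - k) * (x - int (m * (?n - k))))"
    using rook_number_eq_0[of B "Suc ?n" m]
    by (simp add: falling_m_def Suc_diff_le mult.assoc)
  also have "(\<Sum>k\<le>Suc ?n. in_last k * ?f (Suc ?n - k)) =
      (\<Sum>k\<le>?n. ?r k * ?f (?n - k) * (int b - int (m * k)))"
    unfolding in_last_def by (subst sum.atMost_Suc_shift) (simp add: mult_ac)
  also have "(\<Sum>k\<le>?n. ?r k * ?f (?n - k) * (x - int (m * (?n - k)))) +
      (\<Sum>k\<le>?n. ?r k * ?f (?n - k) * (int b - int (m * k)))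
      = (\<Sum>k\<le>?n. ?r k * ?f (?n - k) * (x + int b - int (m * ?n)))"
    unfolding sum.distrib[symmetric]
    by (intro sum.cong refl) (simp add: algebra_simps of_nat_diff diff_mult_distrib2)
  finally show ?thesis
    unfolding rook_poly_def by (simp add: sum_distrib_right)
qed

lemma falling_m_independent:
  assumes m: "m > 0" and zero: "\<forall>x. (\<Sum>j\<le>n. e j * falling_m m j x) = 0"
  shows "j \<le> n \<Longrightarrow> e j = 0"
proof (induction j rule: less_induct)
  case (less j)
  have "e l * falling_m m l (int (m * j)) = 0" if "l \<le> n" "l \<noteq> j" for l
  proof (cases "l < j")
    case True
    then show ?thesis using less by simp
  next
    case False
    then have "j < l" using that by simp
    then show ?thesis
      unfolding falling_m_def by (simp add: prod_zero_iff) blast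
  qed
  then have "(\<Sum>l\<in>{..n} - {j}. e l * falling_m m l (int (m * j))) = 0"
    by (intro sum.neutral) blast
  then have "(\<Sum>l\<le>n. e l * falling_m m l (int (m * j))) = e j * falling_m m j (int (m * j))"
    using less.prems by (subst sum.remove[of _ j]) auto
  moreover have "falling_m m j (int (m * j)) \<noteq> 0"
    using m unfolding falling_m_def by (auto simp: prod_zero_iff)
  ultimately show ?case
    using zero by simp
qed

lemma singleton_board_butlast:
  assumes sing: "singleton_board m (B @ [b])"
  shows "singleton_board m B"
  unfolding singleton_board_def ferrers_def
proof (intro conjI allI impI)
  show "sorted B"
    using sing unfolding singleton_board_def ferrers_def by (simp add: sorted_append)
  fix i assume "Suc i < length B" "int (B ! i) - floor_m m (int (B ! i)) \<noteq> 0"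
  then show "floor_m m (int (B ! i)) < floor_m m (int (B ! Suc i))"
    using sing[unfolded singleton_board_def, THEN conjunct2, rule_format, of i]
    by (simp add: nth_append)
qed

lemma singleton_board_div_less:
  assumes "singleton_board m B" "Suc i < length B" "B ! i mod m \<noteq> 0"
  shows "B ! i div m < B ! Suc i div m"
proof -
  have "int (B ! i) - floor_m m (int (B ! i)) = int (B ! i mod m)"
    unfolding floor_m_def by (simp add: minus_mult_div_eq_mod of_nat_mod)
  then have "floor_m m (int (B ! i)) < floor_m m (int (B ! Suc i))"
    using assms unfolding singleton_board_def by simp
  then show ?thesis
    unfolding floor_m_of_nat of_nat_less_iff by simp
qed

lemma level_top_le:
  assumes m: "m > 0" and r: "1 \<le> r" "r \<le> a" and "a \<le> b"
    and step: "a mod m \<noteq> 0 \<Longrightarrow> a div m < b div m"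
  shows "m * Suc (level m r) \<le> b"
proof -
  have "level m r < a div m" if "a mod m = 0"
  proof -
    have "r - 1 < a div m * m"
      using that r div_mult_mod_eq[of a m] by simp
    then show ?thesis
      unfolding level_def using m by (simp add: div_less_iff_less_mult)
  qed
  moreover have "level m r \<le> a div m"
    unfolding level_def using r by (simp add: div_le_mono)
  ultimately have "Suc (level m r) \<le> b div m"
    using step div_le_mono[OF \<open>a \<le> b\<close>, of m] by (cases "a mod m = 0") auto
  then have "m * Suc (level m r) \<le> m * (b div m)"
    by (rule mult_le_mono2)
  also have "\<dots> \<le> b"
    by (rule times_div_less_eq_dividend)
  finally show ?thesis .
qed

lemma singleton_board_append_fits:
  assumes m: "m > 0" and sing: "singleton_board m (B @ [b])"
  shows "\<forall>(c, r)\<in>cells B. m * Suc (level m r) \<le> b"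
proof clarify
  fix c r assume "(c, r) \<in> cells B"
  then have c: "c < length B" "1 \<le> r" "r \<le> B ! c"
    unfolding cells_def by auto
  define a where "a = B ! (length B - 1)"
  have "sorted B" "\<forall>x\<in>set B. x \<le> b"
    using sing unfolding singleton_board_def ferrers_def by (auto simp: sorted_append)
  then have ra: "r \<le> a" and ab: "a \<le> b"
    using c unfolding a_def by (auto simp: sorted_nth_mono intro: order_trans)
  have "a div m < b div m" if "a mod m \<noteq> 0"
  proof -
    have "Suc (length B - 1) = length B"
      using c(1) by simp
    then show ?thesis
      using singleton_board_div_less[OF sing, of "length B - 1"] that c(1)
      unfolding a_def by (simp add: nth_append)
  qed
  then show "m * Suc (level m r) \<le> b"
    using level_top_le[OF m c(2) ra ab] by blast
qed

lemma length_root_vector [simp]: "length (root_vector m B) = length B"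
  unfolding root_vector_def by simp

lemma root_vector_append:
  "root_vector m (B @ [b]) = root_vector m B @ [int (m * length B) - int b]"
  unfolding root_vector_def by (auto simp: nth_append)

theorem rook_poly_singleton_board:
  assumes m: "m > 0"
  shows "singleton_board m B \<Longrightarrow> rook_poly m B x = (\<Prod>z\<leftarrow>root_vector m B. x - z)"
proof (induction B rule: rev_induct)
  case Nil
  then show ?case
    unfolding rook_poly_def falling_m_def root_vector_def by (simp add: rook_number_0)
next
  case (snoc b B)
  have "rook_poly m (B @ [b]) x = rook_poly m B x * (x - (int (m * length B) - int b))"
    using rook_poly_append[OF m singleton_board_append_fits[OF m snoc.prems]] by simp
  then show ?case
    using snoc.IH[OF singleton_board_butlast[OF snoc.prems]]
    by (simp add: root_vector_append)
qed

theorem rook_equiv_if_root_vectors_perm: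
  assumes m: "m > 0" and sing: "singleton_board m B1" "singleton_board m B2"
    and perm: "mset (root_vector m B1) = mset (root_vector m B2)"
  shows "rook_equiv m B1 B2"
proof -
  define n where "n = length B1"
  have len: "length B2 = n"
    unfolding n_def by (metis perm size_mset length_root_vector)
  have rook_poly_rev: "rook_poly m B x =
      (\<Sum>j\<le>length B. int (rook_number (length B - j) m B) * falling_m m j x)" for B x
    unfolding rook_poly_def atLeast0AtMost[symmetric]
    by (subst sum.atLeastAtMost_rev) simp
  have "rook_poly m B1 x = rook_poly m B2 x" for x
    using perm rook_poly_singleton_board[OF m] sing
    by (metis mset_map prod_mset_prod_list)
  then have "\<forall>x. (\<Sum>j\<le>n. (int (rook_number (n - j) m B1) - int (rook_number (n - j) m B2))
      * falling_m m j x) = 0"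
    unfolding rook_poly_rev len n_def by (simp add: left_diff_distrib sum_subtractf)
  from falling_m_independent[OF m this]
  have "rook_number k m B1 = rook_number k m B2" if "k \<le> n" for k
    using that by (metis diff_diff_cancel diff_le_self eq_iff_diff_eq_0 of_nat_eq_iff)
  moreover have "rook_number k m B1 = rook_number k m B2" if "n < k" for k
    using that len rook_number_eq_0 unfolding n_def by simp
  ultimately show ?thesis
    unfolding rook_equiv_def by (meson not_le)
qed

section \<open>Root vectors of singleton boards\<close>

(* Both sides say that b is at least the least multiple of m that is not below a. *)
lemma singleton_step_iff_root_step:
  fixes a b j m :: nat
  assumes m: "m > 0"
  shows "(a \<le> b \<and> (int a - floor_m m (int a) \<noteq> 0 \<longrightarrow> floor_m m (int a) < floor_m m (int b)))
    \<longleftrightarrow> int (m * Suc j) - int b \<le> next_mult m (int (m * j) - int a)"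
proof -
  define q where "q = a div m"
  define r where "r = a mod m"
  have a: "a = m * q + r" "r < m" unfolding q_def r_def using m by simp_all
  have fa: "floor_m m (int a) = int (m * q)" unfolding floor_m_def q_def by (simp add: zdiv_int)
  have fb: "floor_m m (int b) = int (m * (b div m))" unfolding floor_m_def by (simp add: zdiv_int)
  show ?thesis
  proof (cases "r = 0")
    case True
    have fl: "floor_m m (int (m * j) - int a) = int m * (int j - int q)"
      using a True m by (intro floor_m_eqI[where k = "int j - int q"]) (auto simp: algebra_simps)
    show ?thesis
      unfolding next_mult_def fl using a True fa
      by (simp add: algebra_simps) (metis of_nat_le_iff of_nat_mult)
  next
    case False
    have fl: "floor_m m (int (m * j) - int a) = int m * (int j - int q - 1)"
      using a False m by (intro floor_m_eqI[where k = "int j - int q - 1"]) (auto simp: algebra_simps)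
    have "q < b div m \<longleftrightarrow> m * (q + 1) \<le> b"
      using m by (simp add: Suc_le_eq[symmetric] less_eq_div_iff_mult_less_eq mult.commute)
    also have "\<dots> \<longleftrightarrow> int m * (int q + 1) \<le> int b"
      by (metis of_nat_1 of_nat_add of_nat_le_iff of_nat_mult)
    finally have div_less: "q < b div m \<longleftrightarrow> int m * (int q + 1) \<le> int b" .
    have "a \<le> b" if "int m * (int q + 1) \<le> int b"
    proof -
      have "int a < int m * (int q + 1)"
        using a by (simp add: algebra_simps)
      then show ?thesis
        using that by linarith
    qed
    then show ?thesis
      unfolding next_mult_def fl using div_less a False fa fb m by (auto simp: algebra_simps)
  qed
qed

lemma singleton_board_iff_root_vector:
  assumes m: "m > 0"
  shows "singleton_board m B \<longleftrightarrow>
    (\<forall>j. Suc j < length B \<longrightarrow> root_vector m B ! Suc j \<le> next_mult m (root_vector m B ! j))"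
proof -
  have rv: "root_vector m B ! j = int (m * j) - int (B ! j)" if "j < length B" for j
    using that unfolding root_vector_def by simp
  have "(B ! j \<le> B ! Suc j \<and> (int (B ! j) - floor_m m (int (B ! j)) \<noteq> 0 \<longrightarrow>
          floor_m m (int (B ! j)) < floor_m m (int (B ! Suc j))))
      \<longleftrightarrow> root_vector m B ! Suc j \<le> next_mult m (root_vector m B ! j)"
    if "Suc j < length B" for j
    unfolding rv[OF that] rv[OF Suc_lessD[OF that]] by (rule singleton_step_iff_root_step[OF m])
  then show ?thesis
    unfolding singleton_board_def ferrers_def sorted_iff_nth_Suc by blast
qed

(* The root vector of B starts with - B ! 0, so z ! 0 = 0 means an empty first column, as after
   padding. *)
definition singleton_roots :: "nat \<Rightarrow> int list \<Rightarrow> bool" where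
  "singleton_roots m z \<longleftrightarrow> z \<noteq> [] \<and> z ! 0 = 0 \<and> (\<forall>x\<in>set z. 0 \<le> x) \<and>
     (\<forall>j. Suc j < length z \<longrightarrow> z ! Suc j \<le> next_mult m (z ! j))"

definition board_of_roots :: "nat \<Rightarrow> int list \<Rightarrow> nat list" where
  "board_of_roots m z = map (\<lambda>j. nat (int (m * j) - z ! j)) [0..<length z]"

lemma length_board_of_roots [simp]: "length (board_of_roots m z) = length z"
  unfolding board_of_roots_def by simp

lemma singleton_roots_nonneg: "singleton_roots m z \<Longrightarrow> j < length z \<Longrightarrow> 0 \<le> z ! j"
  unfolding singleton_roots_def by auto

lemma singleton_roots_le:
  assumes m: "m > 0" and z: "singleton_roots m z"
  shows "j < length z \<Longrightarrow> z ! j \<le> int (m * j)"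
proof (induction j)
  case 0
  then show ?case
    using z unfolding singleton_roots_def by simp
next
  case (Suc j)
  then have "z ! Suc j \<le> next_mult m (z ! j)"
    using z unfolding singleton_roots_def by simp
  then show ?case
    using Suc next_mult_le[OF m, of "z ! j"] by simp
qed

lemma nth_board_of_roots:
  assumes "m > 0" "singleton_roots m z" "j < length z"
  shows "int (board_of_roots m z ! j) = int (m * j) - z ! j"
  using singleton_roots_le[OF assms] assms(3) unfolding board_of_roots_def by simp

lemma root_vector_board_of_roots:
  "m > 0 \<Longrightarrow> singleton_roots m z \<Longrightarrow> root_vector m (board_of_roots m z) = z"
  unfolding root_vector_def by (rule nth_equalityI) (auto simp: nth_board_of_roots)

lemma board_of_roots_root_vector: "board_of_roots m (root_vector m B) = B"
  unfolding board_of_roots_def root_vector_def by (rule nth_equalityI) auto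

lemma singleton_board_of_roots:
  assumes m: "m > 0" and z: "singleton_roots m z"
  shows "singleton_board m (board_of_roots m z)"
  using z unfolding singleton_board_iff_root_vector[OF m] root_vector_board_of_roots[OF m z]
  by (simp add: singleton_roots_def)

lemma singleton_roots_root_vector:
  assumes m: "m > 0" and "singleton_board m B" "B \<noteq> []"
    and nonneg: "\<forall>x\<in>set (root_vector m B). 0 \<le> x"
  shows "singleton_roots m (root_vector m B)"
proof -
  have "root_vector m B ! 0 \<le> 0"
    using \<open>B \<noteq> []\<close> unfolding root_vector_def by auto
  moreover have "root_vector m B ! 0 \<in> set (root_vector m B)"
    using \<open>B \<noteq> []\<close> by (intro nth_mem) simp
  ultimately show ?thesis
    using assms unfolding singleton_roots_def singleton_board_iff_root_vector[OF m]
    by (auto simp: root_vector_def)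
qed

lemma singleton_roots_append:
  assumes "singleton_roots m u" "0 \<le> i" "i \<le> next_mult m (last u)"
  shows "singleton_roots m (u @ [i])"
proof -
  have "u \<noteq> []"
    using assms(1) unfolding singleton_roots_def by simp
  have "(u @ [i]) ! Suc j \<le> next_mult m ((u @ [i]) ! j)" if "Suc j < length (u @ [i])" for j
  proof (cases "Suc j < length u")
    case True
    then show ?thesis
      using assms(1) unfolding singleton_roots_def by (simp add: nth_append)
  next
    case False
    then have "j = length u - 1"
      using that by simp
    then show ?thesis
      using assms(3) \<open>u \<noteq> []\<close> by (simp add: nth_append last_conv_nth)
  qed
  then show ?thesis
    using assms \<open>u \<noteq> []\<close> unfolding singleton_roots_def by (auto simp: nth_append)
qed

lemma singleton_roots_butlast:
  assumes "singleton_roots m (u @ [i])" "u \<noteq> []"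
  shows "singleton_roots m u"
proof -
  have "u ! Suc j \<le> next_mult m (u ! j)" if "Suc j < length u" for j
    using assms that unfolding singleton_roots_def by (auto simp: nth_append dest!: spec[of _ j])
  then show ?thesis
    using assms unfolding singleton_roots_def by (auto simp: nth_append)
qed

section \<open>Swapping two root values\<close>

definition root_swap :: "nat \<Rightarrow> int list \<Rightarrow> int list \<Rightarrow> bool" where
  "root_swap m z z' \<longleftrightarrow> singleton_roots m z \<and> singleton_roots m z' \<and>
     (\<exists>p q. p < length z \<and> q < length z \<and> z ! p \<noteq> z ! q \<and> z' = z[p := z ! q, q := z ! p])"

lemma root_swap_mset: "root_swap m z z' \<Longrightarrow> mset z' = mset z"
  unfolding root_swap_def by (auto simp: mset_swap)

lemma rtranclp_root_swap_mset: "(root_swap m)\<^sup>*\<^sup>* z z' \<Longrightarrow> mset z' = mset z"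
  by (induction rule: rtranclp_induct) (auto dest: root_swap_mset)

lemma rtranclp_root_swap_singleton_roots:
  "(root_swap m)\<^sup>*\<^sup>* z z' \<Longrightarrow> singleton_roots m z \<Longrightarrow> singleton_roots m z'"
  by (induction rule: rtranclp_induct) (auto simp: root_swap_def)

lemma board_edge_swap:
  assumes m: "m > 0" and z: "singleton_roots m z" and z': "singleton_roots m z'"
    and pq: "p < length z" "q < length z" "z ! p < z ! q" and swap: "z' = z[p := z ! q, q := z ! p]"
  shows "board_edge (board_of_roots m z) (board_of_roots m z')"
proof -
  let ?C = "board_of_roots m z" and ?C' = "board_of_roots m z'" and ?k = "nat (z ! q - z ! p)"
  have len: "length z' = length z"
    using swap by simp
  have "p \<noteq> q"
    using pq by auto
  have C: "int (?C ! l) = int (m * l) - z ! l" if "l < length z" for l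
    using nth_board_of_roots[OF m z that] .
  have C': "int (?C' ! l) = int (m * l) - z' ! l" if "l < length z" for l
    using nth_board_of_roots[OF m z'] that len by simp
  have "int (?C ! p) = int (?C' ! p + ?k)" "int (?C' ! q) = int (?C ! q + ?k)"
    using C C' pq \<open>p \<noteq> q\<close> unfolding swap by simp_all
  moreover have "\<forall>l < length z. l \<noteq> p \<longrightarrow> l \<noteq> q \<longrightarrow> int (?C ! l) = int (?C' ! l)"
    using C C' unfolding swap by simp
  ultimately have "?C ! p = ?C' ! p + ?k" "?C' ! q = ?C ! q + ?k"
    "\<forall>l < length z. l \<noteq> p \<longrightarrow> l \<noteq> q \<longrightarrow> ?C ! l = ?C' ! l"
    by (simp_all only: of_nat_eq_iff)
  then show ?thesis
    unfolding board_edge_def Let_def pad_def len length_board_of_roots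
    using pq \<open>p \<noteq> q\<close> by (intro exI[of _ p] exI[of _ q] exI[of _ ?k]) simp
qed

lemma board_edge_root_swap:
  assumes m: "m > 0" and swap: "root_swap m z z'"
  shows "board_edge (board_of_roots m z) (board_of_roots m z')"
proof -
  obtain p q where pq: "p < length z" "q < length z" "z ! p \<noteq> z ! q"
    and z': "z' = z[p := z ! q, q := z ! p]" and roots: "singleton_roots m z" "singleton_roots m z'"
    using swap unfolding root_swap_def by blast
  show ?thesis
  proof (cases "z ! p < z ! q")
    case True
    show ?thesis
      by (rule board_edge_swap[OF m roots pq(1,2) True z'])
  next
    case False
    then have "z ! q < z ! p"
      using pq(3) by simp
    moreover have "z' = z[q := z ! p, p := z ! q]"
      using z' list_update_swap[of p q] pq(3) by fastforce
    ultimately show ?thesis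
      using board_edge_swap[OF m roots pq(2,1)] by blast
  qed
qed

lemma rtranclp_root_swap_G_edge:
  assumes m: "m > 0" and z: "singleton_roots m z"
  shows "(root_swap m)\<^sup>*\<^sup>* z z' \<Longrightarrow>
    (G_edge m (board_of_roots m z))\<^sup>*\<^sup>* (board_of_roots m z) (board_of_roots m z')"
proof (induction rule: rtranclp_induct)
  case base
  then show ?case by simp
next
  case (step u u')
  have vertex: "G_vertex m (board_of_roots m z) (board_of_roots m v)"
    if "singleton_roots m v" "mset v = mset z" for v
    unfolding G_vertex_def
    using rook_equiv_if_root_vectors_perm[OF m singleton_board_of_roots[OF m that(1)]
        singleton_board_of_roots[OF m z]] that
    by (simp add: singleton_board_of_roots[OF m] root_vector_board_of_roots[OF m] z)
  have "mset u = mset z" "mset u' = mset z"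
    using rtranclp_root_swap_mset[OF step.hyps(1)] root_swap_mset[OF step.hyps(2)] by simp_all
  moreover have "singleton_roots m u" "singleton_roots m u'"
    using step.hyps(2) unfolding root_swap_def by simp_all
  ultimately have "G_edge m (board_of_roots m z) (board_of_roots m u) (board_of_roots m u')"
    unfolding G_edge_def using vertex board_edge_root_swap[OF m step.hyps(2)] by simp
  with step.IH show ?case
    by (rule rtranclp.rtrancl_into_rtrancl)
qed

lemma root_swap_append:
  assumes swap: "root_swap m u u'" and "0 \<le> i"
    and "i \<le> next_mult m (last u)" "i \<le> next_mult m (last u')"
  shows "root_swap m (u @ [i]) (u' @ [i])"
proof -
  obtain p q where pq: "p < length u" "q < length u" "u ! p \<noteq> u ! q"
    and u': "u' = u[p := u ! q, q := u ! p]" and "singleton_roots m u" "singleton_roots m u'"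
    using swap unfolding root_swap_def by blast
  then have "singleton_roots m (u @ [i])" "singleton_roots m (u' @ [i])"
    using assms singleton_roots_append by blast+
  moreover have "u' @ [i] = (u @ [i])[p := (u @ [i]) ! q, q := (u @ [i]) ! p]"
    using pq u' by (simp add: nth_append list_update_append)
  ultimately show ?thesis
    unfolding root_swap_def using pq
    by (intro conjI exI[of _ p] exI[of _ q]) (auto simp: nth_append)
qed

lemma rtranclp_root_swap_append:
  assumes "(root_swap m)\<^sup>*\<^sup>* w w'" "0 \<le> i"
    and fits: "\<And>u. singleton_roots m u \<Longrightarrow> mset u = mset w \<Longrightarrow> i \<le> next_mult m (last u)"
  shows "(root_swap m)\<^sup>*\<^sup>* (w @ [i]) (w' @ [i])"
  using assms(1)
proof (induction rule: rtranclp_induct)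
  case (step u u')
  have "mset u = mset w" "mset u' = mset w"
    using rtranclp_root_swap_mset[OF step.hyps(1)] root_swap_mset[OF step.hyps(2)] by simp_all
  moreover have "singleton_roots m u" "singleton_roots m u'"
    using step.hyps(2) unfolding root_swap_def by simp_all
  ultimately have "root_swap m (u @ [i]) (u' @ [i])"
    using root_swap_append[OF step.hyps(2) \<open>0 \<le> i\<close>] fits by simp
  with step.IH show ?case
    by (rule rtranclp.rtrancl_into_rtrancl)
qed simp

section \<open>Irregular values\<close>

lemma vcount_eq_count: "vcount z x = count (mset z) x"
proof -
  have "count (mset z) x = card {j. j < length z \<and> x = z ! j}"
    unfolding count_mset count_list_eq_length_filter length_filter_conv_card by simp
  then show ?thesis
    unfolding vcount_def by (simp add: eq_commute)
qed

lemma vcount_pos_iff: "0 < vcount z x \<longleftrightarrow> x \<in> set z"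
  by (simp add: vcount_eq_count)

lemma two_le_vcount:
  assumes "j < length z" "j' < length z" "j \<noteq> j'" "z ! j = x" "z ! j' = x"
  shows "2 \<le> vcount z x"
proof -
  have "{j, j'} \<subseteq> {l. l < length z \<and> z ! l = x}"
    using assms by auto
  then have "card {j, j'} \<le> vcount z x"
    unfolding vcount_def by (rule card_mono[rotated]) simp
  then show ?thesis
    using assms(3) by simp
qed

lemma vcount_le_1:
  assumes "\<forall>j<length z. z ! j = x \<longrightarrow> j = a"
  shows "vcount z x \<le> 1"
proof -
  have "{l. l < length z \<and> z ! l = x} \<subseteq> {a}"
    using assms by auto
  then have "vcount z x \<le> card {a}"
    unfolding vcount_def by (rule card_mono[rotated]) simp
  then show ?thesis
    by simp
qed

definition irregular :: "nat \<Rightarrow> int list \<Rightarrow> int \<Rightarrow> bool" where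
  "irregular m z x \<longleftrightarrow> vcount z x > 1 \<or> (vcount z x = 1 \<and> \<not> int m dvd x)"

definition least_irregular :: "nat \<Rightarrow> int list \<Rightarrow> int \<Rightarrow> bool" where
  "least_irregular m z i \<longleftrightarrow>
     0 \<le> i \<and> irregular m z i \<and> (\<forall>i'. 0 \<le> i' \<and> i' < i \<longrightarrow> \<not> irregular m z i')"

definition multiples_doubled_above :: "nat \<Rightarrow> int list \<Rightarrow> int \<Rightarrow> bool" where
  "multiples_doubled_above m z i \<longleftrightarrow>
     (\<forall>s. 0 \<le> s \<and> int m dvd s \<and> s < Max (set z) \<and> i < s \<longrightarrow> 2 \<le> vcount z s)"

definition doubling_condition :: "nat \<Rightarrow> int list \<Rightarrow> bool" where
  "doubling_condition m z \<longleftrightarrow> (\<forall>i. least_irregular m z i \<longrightarrow> multiples_doubled_above m z i)"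

lemma irregular_in_set: "irregular m z x \<Longrightarrow> x \<in> set z"
  unfolding irregular_def using vcount_pos_iff by fastforce

lemma regular_in_set:
  "x \<in> set z \<Longrightarrow> \<not> irregular m z x \<Longrightarrow> vcount z x = 1 \<and> int m dvd x"
  unfolding irregular_def using vcount_pos_iff[of z x] by auto

lemma least_irregular_unique:
  "least_irregular m z i \<Longrightarrow> least_irregular m z i' \<Longrightarrow> i = i'"
  unfolding least_irregular_def by (cases "i < i'") auto

lemma exists_least_irregular:
  assumes "0 \<le> x" "irregular m z x"
  shows "\<exists>i. least_irregular m z i"
proof -
  define N where "N = (LEAST N. irregular m z (int N))"
  have "irregular m z (int N)"
    unfolding N_def by (rule LeastI[of _ "nat x"]) (use assms in simp)
  moreover have "\<not> irregular m z i'" if "0 \<le> i'" "i' < int N" for i'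
    using not_less_Least[of "nat i'" "\<lambda>N. irregular m z (int N)"] that unfolding N_def by simp
  ultimately show ?thesis
    unfolding least_irregular_def by (intro exI[of _ "int N"]) auto
qed

lemma mset_eq_imp_irregular_eq:
  assumes "mset z' = mset z"
  shows "irregular m z' = irregular m z" "least_irregular m z' = least_irregular m z"
    "multiples_doubled_above m z' = multiples_doubled_above m z"
proof -
  have "vcount z' = vcount z" "set z' = set z"
    using assms by (simp_all add: vcount_eq_count fun_eq_iff) (metis set_mset_mset)
  then show "irregular m z' = irregular m z" "least_irregular m z' = least_irregular m z"
    "multiples_doubled_above m z' = multiples_doubled_above m z"
    unfolding least_irregular_def multiples_doubled_above_def irregular_def
    by simp_all
qed

lemma multiple_occurs_before:
  assumes m: "m > 0" and z: "singleton_roots m z"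
  shows "k < length z \<Longrightarrow> 0 \<le> s \<Longrightarrow> int m dvd s \<Longrightarrow> s \<le> z ! k \<Longrightarrow> \<exists>j\<le>k. z ! j = s"
proof (induction k)
  case 0
  then show ?case
    using z unfolding singleton_roots_def by auto
next
  case (Suc k)
  show ?case
  proof (cases "s \<le> z ! k")
    case True
    then show ?thesis
      using Suc by (meson le_SucI Suc_lessD)
  next
    case False
    then have "next_mult m (z ! k) \<le> s"
      using next_mult_le_dvd[OF m \<open>int m dvd s\<close>] by simp
    moreover have "z ! Suc k \<le> next_mult m (z ! k)"
      using z Suc.prems unfolding singleton_roots_def by simp
    ultimately show ?thesis
      using Suc.prems by (intro exI[of _ "Suc k"]) simp
  qed
qed

lemma no_irregular_imp_multiples:
  assumes m: "m > 0" and w: "singleton_roots m w" and regular: "\<forall>x\<ge>0. \<not> irregular m w x"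
  shows "j < length w \<Longrightarrow> w ! j = int (m * j)"
proof (induction j rule: less_induct)
  case (less j)
  have once: "vcount w x = 1 \<and> int m dvd x" if "x \<in> set w" for x
    using regular regular_in_set[OF that] w that unfolding singleton_roots_def by blast
  show ?case
  proof (cases j)
    case 0
    then show ?thesis
      using w unfolding singleton_roots_def by simp
  next
    case (Suc j')
    have "w ! j \<le> next_mult m (w ! j')"
      using w less.prems Suc unfolding singleton_roots_def by simp
    then have upper: "w ! j \<le> int m * int j"
      using less.IH[of j'] less.prems Suc next_mult_le[OF m, of "w ! j'"] by (simp add: algebra_simps)
    obtain t where t: "w ! j = int m * t"
      using once[of "w ! j"] less.prems by (auto elim: dvdE)
    then have "0 \<le> t" "t \<le> int j"
      using singleton_roots_nonneg[OF w less.prems] upper m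
      by (simp_all add: zero_le_mult_iff mult_le_cancel_left)
    moreover have "\<not> t < int j"
    proof
      assume "t < int j"
      then have "w ! nat t = w ! j" "nat t < j"
        using less.IH[of "nat t"] less.prems t \<open>0 \<le> t\<close> by simp_all
      then have "2 \<le> vcount w (w ! j)"
        using two_le_vcount[of "nat t" w j] less.prems by simp
      then show False
        using once[of "w ! j"] less.prems by simp
    qed
    ultimately show ?thesis
      using t by simp
  qed
qed

lemma two_le_vcount_last:
  assumes m: "m > 0" and z: "singleton_roots m z" and "int m dvd last z"
    and k: "k < length z" "last z < z ! k"
  shows "2 \<le> vcount z (last z)"
proof -
  have "z \<noteq> []"
    using z unfolding singleton_roots_def by simp
  then have last: "last z = z ! (length z - 1)" "0 \<le> last z"
    using z by (auto simp: last_conv_nth singleton_roots_def)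
  obtain j where "j \<le> k" "z ! j = last z"
    using multiple_occurs_before[OF m z k(1) last(2) \<open>int m dvd last z\<close>] k(2) by auto
  moreover have "k \<noteq> length z - 1"
    using k last(1) by auto
  ultimately show ?thesis
    using two_le_vcount[of j z "length z - 1"] k(1) last(1) by simp
qed

lemma least_irregular_le_last:
  assumes m: "m > 0" and z: "singleton_roots m z" and i: "least_irregular m z i"
  shows "i \<le> last z"
proof (rule ccontr)
  assume "\<not> i \<le> last z"
  have "last z \<in> set z" "0 \<le> last z"
    using z by (auto simp: singleton_roots_def)
  then have "\<not> irregular m z (last z)"
    using i \<open>\<not> i \<le> last z\<close> unfolding least_irregular_def by simp
  then have once: "vcount z (last z) = 1" and "int m dvd last z"
    using regular_in_set \<open>last z \<in> set z\<close> by blast+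
  obtain k where "k < length z" "z ! k = i"
    using irregular_in_set i unfolding least_irregular_def by (metis in_set_conv_nth)
  then have "2 \<le> vcount z (last z)"
    using two_le_vcount_last[OF m z \<open>int m dvd last z\<close>] \<open>\<not> i \<le> last z\<close> by simp
  then show False
    using once by simp
qed

lemma floor_m_in_set_butlast:
  assumes m: "m > 0" and wi: "singleton_roots m (w @ [i])" and i: "irregular m (w @ [i]) i"
  shows "floor_m m i \<in> set w"
proof (cases "floor_m m i = i")
  case True
  then have "int m dvd i"
    using dvd_floor_m by metis
  then have "1 < vcount (w @ [i]) i"
    using i unfolding irregular_def by auto
  then show ?thesis
    using True by (simp add: vcount_eq_count)
next
  case False
  have "0 \<le> i"
    using wi unfolding singleton_roots_def by simp
  then have "0 \<le> floor_m m i" "floor_m m i \<le> (w @ [i]) ! length w"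
    using dvd_le_floor_m[OF m, of 0 i] floor_m_le[OF m, of i] by simp_all
  then obtain j where "j \<le> length w" "(w @ [i]) ! j = floor_m m i"
    using multiple_occurs_before[OF m wi, of "length w" "floor_m m i"] dvd_floor_m by auto
  then show ?thesis
    using False by (auto simp: nth_append in_set_conv_nth split: if_splits)
qed

lemma least_irregular_le_next_mult_last:
  assumes m: "m > 0" and wi: "singleton_roots m (w @ [i])" and i: "least_irregular m (w @ [i]) i"
    and u: "singleton_roots m u" and perm: "mset u = mset w"
  shows "i \<le> next_mult m (last u)"
proof (rule ccontr)
  assume "\<not> i \<le> next_mult m (last u)"
  let ?x = "last u"
  have "set u = set w"
    using perm by (metis set_mset_mset)
  then have x: "?x \<in> set w" "0 \<le> ?x"
    using u by (auto simp: singleton_roots_def)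
  have "?x < i"
    using \<open>\<not> i \<le> next_mult m ?x\<close> less_next_mult[OF m, of ?x] by simp
  then have "\<not> irregular m (w @ [i]) ?x"
    using i x(2) unfolding least_irregular_def by simp
  then have once: "vcount (w @ [i]) ?x = 1" and "int m dvd ?x"
    using regular_in_set[of ?x "w @ [i]"] x(1) by auto
  have "?x < floor_m m i"
    using dvd_le_floor_m[OF m dvd_next_mult, of ?x i] \<open>\<not> i \<le> next_mult m ?x\<close>
      less_next_mult[OF m, of ?x] by simp
  moreover obtain k where "k < length u" "u ! k = floor_m m i"
    using floor_m_in_set_butlast[OF m wi] i \<open>set u = set w\<close>
    unfolding least_irregular_def by (metis in_set_conv_nth)
  ultimately have "2 \<le> vcount u ?x"
    using two_le_vcount_last[OF m u \<open>int m dvd ?x\<close>] by simp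
  then show False
    using once perm \<open>?x < i\<close> by (simp add: vcount_eq_count)
qed

lemma rtranclp_root_swap_append_least_irregular:
  assumes m: "m > 0" and wi: "singleton_roots m (w @ [i])" and i: "least_irregular m (w @ [i]) i"
    and swaps: "(root_swap m)\<^sup>*\<^sup>* w w'"
  shows "(root_swap m)\<^sup>*\<^sup>* (w @ [i]) (w' @ [i])"
  using rtranclp_root_swap_append[OF swaps] least_irregular_le_next_mult_last[OF m wi i] i
  unfolding least_irregular_def by blast

section \<open>Moving the least irregular value to the end\<close>

definition swappable_with_last :: "nat \<Rightarrow> int list \<Rightarrow> nat \<Rightarrow> bool" where
  "swappable_with_last m z q \<longleftrightarrow>
     1 \<le> q \<and> q < length z - 1 \<and> z ! q < last z \<and> last z \<le> next_mult m (z ! (q - 1))"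

lemma last_le_if_no_swappable:
  assumes m: "m > 0" and z: "singleton_roots m z" and no_swap: "\<forall>q. \<not> swappable_with_last m z q"
    and a: "last z \<le> next_mult m (z ! a)"
  shows "a < j \<Longrightarrow> j < length z \<Longrightarrow> last z \<le> z ! j"
proof (induction j)
  case (Suc j)
  have "last z \<le> next_mult m (z ! j)"
    using Suc a less_next_mult[OF m, of "z ! j"] by (cases "j = a") auto
  show ?case
  proof (cases "Suc j = length z - 1")
    case True
    then show ?thesis
      using z by (simp add: last_conv_nth singleton_roots_def)
  next
    case False
    then have "Suc j < length z - 1"
      using Suc.prems by linarith
    then show ?thesis
      using no_swap[THEN spec, of "Suc j"] \<open>last z \<le> next_mult m (z ! j)\<close>
      unfolding swappable_with_last_def by auto
  qed
qed simp

(* The separating entry is the largest multiple of m below the last entry, found at the first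
   position a whose next multiple of m reaches the last entry. *)
lemma last_separated_if_no_swappable:
  assumes m: "m > 0" and z: "singleton_roots m z" and pos: "0 < last z"
    and no_swap: "\<forall>q. \<not> swappable_with_last m z q"
  shows "\<exists>a < length z - 1. int m dvd z ! a \<and> z ! a < last z \<and> (\<forall>j<a. z ! j < z ! a) \<and>
    (\<forall>j. a < j \<longrightarrow> j < length z \<longrightarrow> last z \<le> z ! j)"
proof -
  let ?n = "length z" and ?y = "last z"
  have "z \<noteq> []"
    using z unfolding singleton_roots_def by simp
  then have last: "?y = z ! (?n - 1)"
    by (simp add: last_conv_nth)
  have "?n \<noteq> 1"
    using z pos last unfolding singleton_roots_def by auto
  then have n: "Suc (?n - 2) = ?n - 1" "?n - 1 < ?n"
    using \<open>z \<noteq> []\<close> by (cases ?n; simp)+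
  define a where "a = (LEAST a. ?y \<le> next_mult m (z ! a))"
  have "?y \<le> next_mult m (z ! (?n - 2))"
    using z n last unfolding singleton_roots_def by metis
  then have a_less: "a < ?n - 1" and a: "?y \<le> next_mult m (z ! a)"
    unfolding a_def using n by (auto intro: LeastI Least_le order.strict_trans1)
  note above = last_le_if_no_swappable[OF m z no_swap a]
  define s where "s = floor_m m (?y - 1)"
  have s: "0 \<le> s" "int m dvd s" "s < ?y"
    using dvd_le_floor_m[OF m, of 0 "?y - 1"] floor_m_le[OF m, of "?y - 1"] pos
    unfolding s_def by (simp_all add: floor_m_def)
  have below: "z ! j < s" if "j < a" for j
  proof -
    have "next_mult m (z ! j) \<le> ?y - 1"
      using that not_less_Least[of j "\<lambda>a. ?y \<le> next_mult m (z ! a)"] unfolding a_def by simp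
    then have "next_mult m (z ! j) \<le> s"
      unfolding s_def by (rule dvd_le_floor_m[OF m dvd_next_mult])
    then show ?thesis
      using less_next_mult[OF m, of "z ! j"] by simp
  qed
  obtain js where "js \<le> ?n - 1" "z ! js = s"
    using multiple_occurs_before[OF m z n(2) s(1,2)] s(3) last by auto
  then have "z ! a = s"
    using below above s(3) n(2) by (metis le_less_trans linorder_neqE_nat not_le order_less_irrefl)
  then show ?thesis
    using a_less s below above by auto
qed

(* The separating multiple occurs only once, so it is at most i by the hypothesis, hence it is i
   itself, which is then not irregular. *)
lemma exists_swappable_with_last:
  assumes m: "m > 0" and z: "singleton_roots m z" and i: "least_irregular m z i"
    and doubled: "multiples_doubled_above m z i" and less: "i < last z"
  shows "\<exists>q. swappable_with_last m z q"
proof (rule ccontr)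
  assume "\<nexists>q. swappable_with_last m z q"
  moreover have "0 < last z"
    using i less unfolding least_irregular_def by simp
  ultimately obtain a where a: "a < length z - 1" "int m dvd z ! a" "z ! a < last z"
    and below: "\<forall>j<a. z ! j < z ! a" and above: "\<forall>j. a < j \<longrightarrow> j < length z \<longrightarrow> last z \<le> z ! j"
    using last_separated_if_no_swappable[OF m z] by blast
  have only_a: "j = a" if "j < length z" "z ! a \<le> z ! j" "z ! j < last z" for j
  proof (rule ccontr)
    assume "j \<noteq> a"
    then consider "j < a" | "a < j"
      by linarith
    then show False
    proof cases
      case 1
      then show False
        using below that(2) by fastforce
    next
      case 2
      then show False
        using above that(1,3) by fastforce
    qed
  qed
  then have once: "vcount z (z ! a) \<le> 1"
    using a(3) by (intro vcount_le_1[where a = a]) simp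
  have "z ! a \<le> i"
  proof (rule ccontr)
    have "last z \<in> set z"
      using z unfolding singleton_roots_def by simp
    then have "z ! a < Max (set z)"
      using Max_ge[OF finite_set] a(3) by (meson order.strict_trans2)
    moreover assume "\<not> z ! a \<le> i"
    ultimately have "2 \<le> vcount z (z ! a)"
      using doubled singleton_roots_nonneg[OF z] a(1,2) unfolding multiples_doubled_above_def by simp
    then show False
      using once by simp
  qed
  obtain k where k: "k < length z" "z ! k = i"
    using irregular_in_set i unfolding least_irregular_def by (metis in_set_conv_nth)
  then have "k = a"
    using only_a less \<open>z ! a \<le> i\<close> by simp
  then show False
    using i k once a(2) unfolding least_irregular_def irregular_def by simp
qed

lemma swap_with_last_steps:
  assumes m: "m > 0" and steps: "\<forall>j. Suc j < length z \<longrightarrow> z ! Suc j \<le> next_mult m (z ! j)"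
    and q: "swappable_with_last m z q" and j: "Suc j < length z"
  defines "z' \<equiv> z[q := last z, length z - 1 := z ! q]"
  shows "z' ! Suc j \<le> next_mult m (z' ! j)"
proof -
  let ?n = "length z" and ?y = "last z"
  have q: "1 \<le> q" "q < ?n - 1" "z ! q < ?y" "?y \<le> next_mult m (z ! (q - 1))"
    using q unfolding swappable_with_last_def by auto
  then have "z \<noteq> []"
    by auto
  then have last: "?y = z ! (?n - 1)"
    by (simp add: last_conv_nth)
  have z': "z' ! l = (if l = ?n - 1 then z ! q else if l = q then ?y else z ! l)" if "l < ?n" for l
    using that q unfolding z'_def by auto
  consider "Suc j = q" | "j = q" | "Suc j = ?n - 1" "j \<noteq> q"
    | "Suc j \<noteq> q" "j \<noteq> q" "Suc j \<noteq> ?n - 1"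
    by blast
  then show ?thesis
  proof cases
    case 1
    then have "q - 1 = j"
      by simp
    then show ?thesis
      using z' j q 1 by simp
  next
    case 2
    have "z ! Suc j \<le> next_mult m ?y"
      using steps[rule_format, OF j] next_mult_mono[OF m, of "z ! q" ?y] q 2 by simp
    moreover have "z ! q < next_mult m ?y"
      using q less_next_mult[OF m, of ?y] by simp
    ultimately show ?thesis
      using z' j q 2 by simp
  next
    case 3
    then have "?y \<le> next_mult m (z ! j)"
      using steps[rule_format, OF j] last by simp
    then show ?thesis
      using z' j 3 q by simp
  next
    case 4
    moreover have "j \<noteq> ?n - 1"
      using j by linarith
    ultimately show ?thesis
      using z' j q steps by simp
  qed
qed

lemma root_swap_with_last:
  assumes m: "m > 0" and z: "singleton_roots m z" and q: "swappable_with_last m z q"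
  shows "root_swap m z (z[q := last z, length z - 1 := z ! q])" (is "root_swap m z ?z'")
proof -
  have q_less: "1 \<le> q" "q < length z - 1" "z ! q < last z"
    using q unfolding swappable_with_last_def by auto
  then have "z \<noteq> []"
    by auto
  then have last: "last z = z ! (length z - 1)"
    by (simp add: last_conv_nth)
  have "set ?z' \<subseteq> set z"
    using q_less last by (auto simp: set_update_subset_insert[THEN subsetD])
  moreover have "?z' ! 0 = z ! 0"
    using q_less by simp
  ultimately have "singleton_roots m ?z'"
    using z swap_with_last_steps[OF m _ q] unfolding singleton_roots_def by auto
  moreover have "z ! q \<noteq> z ! (length z - 1)"
    using q_less last by simp
  ultimately show ?thesis
    unfolding root_swap_def using z q_less last
    by (intro conjI exI[of _ q] exI[of _ "length z - 1"]) auto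
qed

lemma reach_least_irregular_last:
  assumes m: "m > 0"
  shows "singleton_roots m z \<Longrightarrow> least_irregular m z i \<Longrightarrow> multiples_doubled_above m z i \<Longrightarrow>
    \<exists>z'. (root_swap m)\<^sup>*\<^sup>* z z' \<and> last z' = i"
proof (induction "nat (last z)" arbitrary: z rule: less_induct)
  case less
  show ?case
  proof (cases "last z = i")
    case False
    then have "i < last z"
      using least_irregular_le_last[OF m less.prems(1,2)] by simp
    then obtain q where q: "swappable_with_last m z q"
      using exists_swappable_with_last[OF m less.prems] by blast
    define z' where "z' = z[q := last z, length z - 1 := z ! q]"
    have swap: "root_swap m z z'"
      unfolding z'_def by (rule root_swap_with_last[OF m less.prems(1) q])
    have q_less: "q < length z - 1" "z ! q < last z"
      using q unfolding swappable_with_last_def by auto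
    then have "z \<noteq> []"
      by auto
    then have "last z' = z ! q"
      using q_less unfolding z'_def by (simp add: last_conv_nth)
    then have "nat (last z') < nat (last z)"
      using q_less singleton_roots_nonneg[OF less.prems(1), of q] by linarith
    moreover have "singleton_roots m z'"
      using swap unfolding root_swap_def by simp
    moreover have "least_irregular m z' i" "multiples_doubled_above m z' i"
      using less.prems(2,3) mset_eq_imp_irregular_eq[OF root_swap_mset[OF swap]] by simp_all
    ultimately obtain z'' where "(root_swap m)\<^sup>*\<^sup>* z' z''" "last z'' = i"
      using less.hyps by blast
    then show ?thesis
      using converse_rtranclp_into_rtranclp[of "root_swap m", OF swap] by blast
  qed blast
qed

section \<open>The canonical prefix\<close>

definition canonical_prefix :: "nat \<Rightarrow> int list \<Rightarrow> bool" where
  "canonical_prefix m z \<longleftrightarrow> (let M = Max (set z); K = nat (floor_m m (M - 1) div int m + 1) in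
     K < length z \<and> (\<forall>j<K. z ! j = int (m * j)) \<and> z ! K = M)"

lemma canonical_prefixI:
  assumes m: "m > 0" and "K < length z" "\<forall>j<K. z ! j = int (m * j)" "z ! K = Max (set z)"
    and bounds: "int m * (int K - 1) < Max (set z)" "Max (set z) \<le> int m * int K"
  shows "canonical_prefix m z"
proof -
  have "floor_m m (Max (set z) - 1) = int m * (int K - 1)"
    using bounds m by (intro floor_m_eqI[where k = "int K - 1"]) (auto simp: algebra_simps)
  then have "nat (floor_m m (Max (set z) - 1) div int m + 1) = K"
    using m by simp
  then show ?thesis
    unfolding canonical_prefix_def Let_def using assms by simp
qed

lemma canonical_prefix_append:
  assumes w: "canonical_prefix m w" and "i \<le> Max (set w)"
  shows "canonical_prefix m (w @ [i])"
proof -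
  have "w \<noteq> []"
    using w unfolding canonical_prefix_def Let_def by auto
  then have "Max (set (w @ [i])) = Max (set w)"
    using \<open>i \<le> Max (set w)\<close> by (simp add: max_def)
  then show ?thesis
    using w unfolding canonical_prefix_def Let_def by (auto simp: nth_append)
qed

lemma last_multiples:
  assumes "z \<noteq> []" "\<forall>j<length z. z ! j = int (m * j)"
  shows "z ! (length z - 1) = int m * (int (length z) - 1)"
  using assms by (simp add: of_nat_diff Suc_le_eq)

lemma Max_set_multiples:
  assumes z: "z \<noteq> []" "\<forall>j<length z. z ! j = int (m * j)"
  shows "Max (set z) = int m * (int (length z) - 1)"
proof (rule Max_eqI)
  show "x \<le> int m * (int (length z) - 1)" if x: "x \<in> set z" for x
  proof -
    obtain j where j: "j < length z" "z ! j = x"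
      using x by (auto simp: in_set_conv_nth)
    then have "int m * int j \<le> int m * (int (length z) - 1)"
      by (intro mult_left_mono) simp_all
    then show ?thesis
      using z(2) j by simp
  qed
  show "int m * (int (length z) - 1) \<in> set z"
    using last_in_set[OF z(1)] last_multiples[OF z] by (simp add: last_conv_nth[OF z(1)])
qed simp

lemma canonical_prefix_multiples:
  assumes m: "m > 0" and z: "z \<noteq> []" "\<forall>j<length z. z ! j = int (m * j)"
  shows "canonical_prefix m z"
  using Max_set_multiples[OF z] last_multiples[OF z] z m
  by (intro canonical_prefixI[where K = "length z - 1"]) (auto simp: of_nat_diff Suc_le_eq)

lemma canonical_prefix_append_top:
  assumes m: "m > 0" and w: "w \<noteq> []" "\<forall>j<length w. w ! j = int (m * j)"
    and i: "int m * (int (length w) - 1) < i" "i \<le> int m * int (length w)"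
  shows "canonical_prefix m (w @ [i])"
proof -
  have "Max (set (w @ [i])) = i"
    using Max_set_multiples[OF w] i(1) w(1) by (simp add: max_def)
  then show ?thesis
    using w i m by (intro canonical_prefixI[where K = "length w"]) (auto simp: nth_append)
qed

lemma canonical_prefix_if_least_irregular_top:
  assumes m: "m > 0" and wi: "singleton_roots m (w @ [i])" and "w \<noteq> []"
    and i: "least_irregular m (w @ [i]) i" and top: "\<forall>x\<in>set w. x < i"
  shows "canonical_prefix m (w @ [i])"
proof -
  have w: "singleton_roots m w"
    using singleton_roots_butlast[OF wi \<open>w \<noteq> []\<close>] .
  have "\<not> irregular m w x" if "0 \<le> x" for x
  proof
    assume x: "irregular m w x"
    then have "x < i"
      using top irregular_in_set by blast
    then have "irregular m (w @ [i]) x"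
      using x unfolding irregular_def by (simp add: vcount_eq_count)
    then show False
      using i \<open>x < i\<close> \<open>0 \<le> x\<close> unfolding least_irregular_def by blast
  qed
  then have mult: "\<forall>j<length w. w ! j = int (m * j)"
    using no_irregular_imp_multiples[OF m w] by blast
  let ?k = "length w"
  have last: "w ! (?k - 1) = int m * (int ?k - 1)"
    using last_multiples[OF \<open>w \<noteq> []\<close> mult] .
  have "w ! (?k - 1) \<in> set w"
    using last_in_set[OF \<open>w \<noteq> []\<close>] by (simp add: last_conv_nth \<open>w \<noteq> []\<close>)
  have "Suc (?k - 1) < length (w @ [i])"
    using \<open>w \<noteq> []\<close> by simp
  then have "(w @ [i]) ! Suc (?k - 1) \<le> next_mult m ((w @ [i]) ! (?k - 1))"
    using wi unfolding singleton_roots_def by blast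
  then have "i \<le> next_mult m (w ! (?k - 1))"
    using \<open>w \<noteq> []\<close> by (simp add: nth_append)
  then have "i \<le> int m * int ?k"
    using next_mult_le[OF m, of "w ! (?k - 1)"] last by (simp add: algebra_simps)
  moreover have "int m * (int ?k - 1) < i"
    using top last \<open>w ! (?k - 1) \<in> set w\<close> by auto
  ultimately show ?thesis
    using canonical_prefix_append_top[OF m \<open>w \<noteq> []\<close> mult] by blast
qed

lemma doubling_condition_butlast:
  assumes i: "least_irregular m (w @ [i]) i" and doubled: "multiples_doubled_above m (w @ [i]) i"
    and Max: "Max (set (w @ [i])) = Max (set w)"
  shows "doubling_condition m w"
  unfolding doubling_condition_def
proof (intro allI impI)
  fix i' assume i': "least_irregular m w i'"
  have same_count: "vcount (w @ [i]) x = vcount w x" if "x \<noteq> i" for x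
    using that by (simp add: vcount_eq_count)
  have "i \<le> i'"
  proof (rule ccontr)
    assume "\<not> i \<le> i'"
    then have "irregular m (w @ [i]) i'"
      using i' same_count[of i'] unfolding least_irregular_def irregular_def by simp
    then show False
      using i i' \<open>\<not> i \<le> i'\<close> unfolding least_irregular_def by simp
  qed
  then show "multiples_doubled_above m w i'"
    using doubled same_count Max unfolding multiples_doubled_above_def by fastforce
qed

lemma reach_least_irregular_appended:
  assumes m: "m > 0" and z: "singleton_roots m z" and i: "least_irregular m z i"
    and doubled: "multiples_doubled_above m z i"
  obtains w where "(root_swap m)\<^sup>*\<^sup>* z (w @ [i])" "w \<noteq> []" "length w < length z"
    "singleton_roots m (w @ [i])" "least_irregular m (w @ [i]) i"
    "multiples_doubled_above m (w @ [i]) i"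
proof -
  obtain z1 where z1: "(root_swap m)\<^sup>*\<^sup>* z z1" "last z1 = i"
    using reach_least_irregular_last[OF m z i doubled] by blast
  have perm: "mset z1 = mset z"
    using rtranclp_root_swap_mset[OF z1(1)] .
  have roots1: "singleton_roots m z1"
    using rtranclp_root_swap_singleton_roots[OF z1(1) z] .
  have i1: "least_irregular m z1 i" "multiples_doubled_above m z1 i"
    using i doubled mset_eq_imp_irregular_eq[OF perm] by simp_all
  define w where "w = butlast z1"
  have z1w: "z1 = w @ [i]"
    using append_butlast_last_id[of z1] roots1 z1(2) unfolding w_def singleton_roots_def
    by simp
  have "w \<noteq> []"
  proof
    assume "w = []"
    then have "z1 = [0]"
      using roots1 z1w unfolding singleton_roots_def by simp
    then show False
      using i1(1) unfolding least_irregular_def irregular_def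
      by (auto simp: vcount_eq_count split: if_splits)
  qed
  moreover have "length w < length z"
    using mset_eq_length[OF perm] unfolding z1w by simp
  ultimately show ?thesis
    using that z1(1) roots1 i1 unfolding z1w by blast
qed

lemma reach_canonical_prefix:
  assumes m: "m > 0"
  shows "singleton_roots m z \<Longrightarrow> doubling_condition m z \<Longrightarrow>
    \<exists>z'. (root_swap m)\<^sup>*\<^sup>* z z' \<and> canonical_prefix m z'"
proof (induction "length z" arbitrary: z rule: less_induct)
  case less
  show ?case
  proof (cases "\<exists>i. least_irregular m z i")
    case False
    then have "\<forall>x\<ge>0. \<not> irregular m z x"
      using exists_least_irregular by blast
    then have "canonical_prefix m z"
      using canonical_prefix_multiples[OF m] no_irregular_imp_multiples[OF m less.prems(1)]
        less.prems(1) unfolding singleton_roots_def by blast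
    then show ?thesis
      by blast
  next
    case True
    then obtain i where i: "least_irregular m z i"
      by blast
    then obtain w where swaps: "(root_swap m)\<^sup>*\<^sup>* z (w @ [i])" and "w \<noteq> []"
      and shorter: "length w < length z" and wi: "singleton_roots m (w @ [i])"
      and i': "least_irregular m (w @ [i]) i" and doubled: "multiples_doubled_above m (w @ [i]) i"
      using reach_least_irregular_appended[OF m less.prems(1)] less.prems(2)
      unfolding doubling_condition_def by metis
    show ?thesis
    proof (cases "\<forall>x\<in>set w. x < i")
      case True
      then show ?thesis
        using canonical_prefix_if_least_irregular_top[OF m wi \<open>w \<noteq> []\<close> i'] swaps by blast
    next
      case False
      then have Max: "Max (set (w @ [i])) = Max (set w)" "i \<le> Max (set w)"
        using \<open>w \<noteq> []\<close> by (auto simp: max_def Max_ge_iff not_less)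
      moreover have "singleton_roots m w"
        using singleton_roots_butlast[OF wi \<open>w \<noteq> []\<close>] .
      ultimately obtain w' where w': "(root_swap m)\<^sup>*\<^sup>* w w'" "canonical_prefix m w'"
        using less.hyps[OF shorter] doubling_condition_butlast[OF i' doubled] by blast
      have "set w' = set w"
        using rtranclp_root_swap_mset[OF w'(1)] by (metis set_mset_mset)
      then have "canonical_prefix m (w' @ [i])"
        using canonical_prefix_append[OF w'(2)] Max(2) by simp
      moreover have "(root_swap m)\<^sup>*\<^sup>* z (w' @ [i])"
        using swaps rtranclp_root_swap_append_least_irregular[OF m wi i' w'(1)] by simp
      ultimately show ?thesis
        by blast
    qed
  qed
qed

theorem lemma20:
  fixes m :: nat and B :: "nat list" and i :: int
  assumes m_pos: "m > 0"
    and sing: "singleton_board m B"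
    and nonempty: "B \<noteq> []"
    and nonneg: "\<forall>z \<in> set (root_vector m B). z \<ge> 0"
    and i_nonneg: "i \<ge> 0"
    and i_prop: "vcount (root_vector m B) i > 1 \<or>
                 (vcount (root_vector m B) i = 1 \<and> \<not> int m dvd i)"
    and i_least: "\<forall>i'. 0 \<le> i' \<and> i' < i \<longrightarrow>
                 \<not> (vcount (root_vector m B) i' > 1 \<or>
                    (vcount (root_vector m B) i' = 1 \<and> \<not> int m dvd i'))"
    and hypS: "\<forall>s. (0 \<le> s \<and> int m dvd s \<and> s < Max (set (root_vector m B)) \<and> s > i)
                 \<longrightarrow> vcount (root_vector m B) s \<ge> 2"
  shows "\<exists>B'. length B' = length B \<and> (G_edge m B)\<^sup>*\<^sup>* B B' \<and>
           (let M = Max (set (root_vector m B));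
                K = nat (floor_m m (M - 1) div int m + 1) in
            K < length B' \<and>
            (\<forall>j < K. root_vector m B' ! j = int (m * j)) \<and>
            root_vector m B' ! K = M)"
proof -
  let ?z = "root_vector m B"
  have roots: "singleton_roots m ?z"
    using singleton_roots_root_vector[OF m_pos sing nonempty nonneg] .
  have "least_irregular m ?z i"
    using i_nonneg i_prop i_least unfolding least_irregular_def irregular_def by blast
  then have "doubling_condition m ?z"
    using hypS least_irregular_unique unfolding doubling_condition_def multiples_doubled_above_def
    by blast
  then obtain z' where z': "(root_swap m)\<^sup>*\<^sup>* ?z z'" "canonical_prefix m z'"
    using reach_canonical_prefix[OF m_pos roots] by blast
  have "mset z' = mset ?z"
    using rtranclp_root_swap_mset[OF z'(1)] .
  then have "length z' = length B" "Max (set z') = Max (set ?z)"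
    by (metis length_root_vector size_mset, metis set_mset_mset)
  moreover have "root_vector m (board_of_roots m z') = z'"
    using root_vector_board_of_roots[OF m_pos rtranclp_root_swap_singleton_roots[OF z'(1) roots]] .
  moreover have "(G_edge m B)\<^sup>*\<^sup>* B (board_of_roots m z')"
    using rtranclp_root_swap_G_edge[OF m_pos roots z'(1)] unfolding board_of_roots_root_vector .
  ultimately show ?thesis
    using z'(2) unfolding canonical_prefix_def by (intro exI[of _ "board_of_roots m z'"]) simp
qed

end
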